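(* Asymptotically almost surely (as $n\to\infty$), $T\sim\mathcal{R}(n,2)$ has the property that every minimal feedback arc set of $T$ contains a matching of size $n-1$.
   Context: $\mathcal{R}(n,2)$ denotes the probability space of bipartite tournaments with vertex classes $A_1,A_2$, each of size $n$, where every edge between $A_1$ and $A_2$ is oriented independently and uniformly at random. A feedback arc set of a directed graph $T$ is a set of edges (viewed as a spanning subgraph) meeting every directed cycle; it is minimal if no proper subset of it is a feedback arc set. *)

theory Defs
  imports "HOL-Probability.Probability"
begin

(* Vertices: (False, i) for i < n form the class A_1, (True, j) for j < n form A_2.
   An orientation of the complete bipartite graph K_{n,n} is encoded by a set
   S \<subseteq> {..<n} \<times> {..<n}: the edge between (False,i) and (True,j) is oriented
   from A_1 to A_2 iff (i,j) \<in> S, otherwise from A_2 to A_1. *)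

type_synonym vert = "bool \<times> nat"

definition orientations :: "nat \<Rightarrow> (nat \<times> nat) set set" where
  "orientations n = Pow ({..<n} \<times> {..<n})"

definition bip_tournament :: "nat \<Rightarrow> (nat \<times> nat) set \<Rightarrow> (vert \<times> vert) set" where
  "bip_tournament n S =
     {((False, i), (True, j)) | i j. i < n \<and> j < n \<and> (i, j) \<in> S} \<union>
     {((True, j), (False, i)) | i j. i < n \<and> j < n \<and> (i, j) \<notin> S}"

definition directed_cycle :: "('a \<times> 'a) set \<Rightarrow> 'a list \<Rightarrow> bool" where
  "directed_cycle E vs \<longleftrightarrow> vs \<noteq> [] \<and> distinct vs \<and>
     (\<forall>i < length vs. (vs ! i, vs ! ((i + 1) mod length vs)) \<in> E)"

definition cycle_edges :: "'a list \<Rightarrow> ('a \<times> 'a) set" where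
  "cycle_edges vs = {(vs ! i, vs ! ((i + 1) mod length vs)) | i. i < length vs}"

definition feedback_arc_set :: "('a \<times> 'a) set \<Rightarrow> ('a \<times> 'a) set \<Rightarrow> bool" where
  "feedback_arc_set E F \<longleftrightarrow> F \<subseteq> E \<and>
     (\<forall>vs. directed_cycle E vs \<longrightarrow> cycle_edges vs \<inter> F \<noteq> {})"

definition minimal_feedback_arc_set :: "('a \<times> 'a) set \<Rightarrow> ('a \<times> 'a) set \<Rightarrow> bool" where
  "minimal_feedback_arc_set E F \<longleftrightarrow> feedback_arc_set E F \<and>
     (\<forall>F'. F' \<subset> F \<longrightarrow> \<not> feedback_arc_set E F')"

definition is_matching :: "('a \<times> 'a) set \<Rightarrow> bool" where
  "is_matching M \<longleftrightarrow> (\<forall>e \<in> M. \<forall>e' \<in> M. e \<noteq> e' \<longrightarrow>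
      {fst e, snd e} \<inter> {fst e', snd e'} = {})"

definition good_property :: "nat \<Rightarrow> (nat \<times> nat) set \<Rightarrow> bool" where
  "good_property n S \<longleftrightarrow> (\<forall>F. minimal_feedback_arc_set (bip_tournament n S) F \<longrightarrow>
      (\<exists>M \<subseteq> F. is_matching M \<and> card M = n - 1))"

end

theory Submission
  imports Defs "HOL-Real_Asymp.Real_Asymp"
begin

(* By the defect form of Hall's
   theorem, either F contains a matching of size n - 1, or some X \<subseteq> A_1 has at most |X| - 2
   neighbours along F; then X and Y = A_2 - N_F(X) satisfy |X| + |Y| \<ge> n + 2 and no edge between
   them lies in F. Hence T has no directed 4-cycle on X \<union> Y, i.e. the out-neighbourhoods in Y of
   the vertices of X form a chain. Sorting 2k vertices of the smaller side by out-degree gives k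
   disjoint pairs whose out-neighbourhoods are nested on at least n/2 common vertices, an event
   of probability (3/4)^(k n/2). A union bound over all choices gives O(n^5 (9/10)^n). *)

section \<open>Hall's marriage theorem\<close>

lemma hall_condition_outside_tight_set:
  assumes hall: "\<forall>Z\<subseteq>A. card Z \<le> card (\<Union>(G ` Z))"
    and fin: "finite A" "\<forall>a\<in>A. finite (G a)"
    and X: "X \<subseteq> A" "card (\<Union>(G ` X)) = card X"
  shows "\<forall>Z\<subseteq>A - X. card Z \<le> card (\<Union>((\<lambda>a. G a - \<Union>(G ` X)) ` Z))"
proof (intro allI impI)
  fix Z assume Z: "Z \<subseteq> A - X"
  define N where "N = \<Union>(G ` X)"
  have "finite Z" "finite X"
    using Z X fin by (auto intro: finite_subset)
  then have "finite (\<Union>(G ` Z))" "finite N"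
    using Z X fin unfolding N_def by auto
  then have finite: "finite Z" "finite X" "finite (\<Union>((\<lambda>a. G a - N) ` Z))" "finite N"
    using \<open>finite Z\<close> \<open>finite X\<close> by (auto intro: finite_subset)
  have "card Z + card X = card (Z \<union> X)"
    using Z finite by (subst card_Un_disjoint) auto
  also have "\<dots> \<le> card (\<Union>(G ` (Z \<union> X)))"
    using hall Z X by blast
  also have "\<dots> = card (\<Union>((\<lambda>a. G a - N) ` Z) \<union> N)"
    unfolding N_def by (rule arg_cong[where f = card]) blast
  also have "\<dots> = card (\<Union>((\<lambda>a. G a - N) ` Z)) + card N"
    using finite by (subst card_Un_disjoint) auto
  finally show "card Z \<le> card (\<Union>((\<lambda>a. G a - N) ` Z))"
    using X(2) unfolding N_def by linarith
qed

lemma hall_condition_remove_element: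
  assumes surplus: "\<forall>Z\<subseteq>A. Z \<noteq> {} \<longrightarrow> Z \<noteq> A \<longrightarrow> card Z < card (\<Union>(G ` Z))"
    and fin: "finite A" "\<forall>a\<in>A. finite (G a)"
    and a: "a \<in> A"
  shows "\<forall>Z\<subseteq>A - {a}. card Z \<le> card (\<Union>((\<lambda>x. G x - {b}) ` Z))"
proof (intro allI impI)
  fix Z assume Z: "Z \<subseteq> A - {a}"
  show "card Z \<le> card (\<Union>((\<lambda>x. G x - {b}) ` Z))"
  proof (cases "Z = {}")
    case False
    have "finite (\<Union>(G ` Z))"
      using Z fin by (auto intro: finite_subset)
    moreover have "card Z < card (\<Union>(G ` Z))"
      using surplus Z a False by blast
    moreover have "\<Union>((\<lambda>x. G x - {b}) ` Z) = \<Union>(G ` Z) - {b}"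
      by blast
    ultimately show ?thesis
      by (cases "b \<in> \<Union>(G ` Z)") (simp_all add: card_Diff_singleton_if)
  qed simp
qed

lemma inj_on_if_disjoint_images:
  assumes f: "inj_on f X" and g: "inj_on g Y" and disj: "f ` X \<inter> g ` (Y - X) = {}"
  shows "inj_on (\<lambda>a. if a \<in> X then f a else g a) (X \<union> Y)"
proof (rule inj_onI)
  have mixed: "f a \<noteq> g b" "g b \<noteq> f a" if "a \<in> X" "b \<in> Y - X" for a b
    using disj that by blast+
  fix a b assume "a \<in> X \<union> Y" "b \<in> X \<union> Y"
    and "(if a \<in> X then f a else g a) = (if b \<in> X then f b else g b)"
  then show "a = b"
    using mixed inj_onD[OF f] inj_onD[OF g] by (auto split: if_splits)
qed

(* The two cases of the Halmos-Vaughan induction for Hall's theorem. *)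
lemma hall_marriage_tight_set:
  fixes A :: "'a set" and G :: "'a \<Rightarrow> 'b set"
  assumes IH: "\<And>B (H :: 'a \<Rightarrow> 'b set). B \<subset> A \<Longrightarrow> \<forall>b\<in>B. finite (H b)
                 \<Longrightarrow> \<forall>Z\<subseteq>B. card Z \<le> card (\<Union>(H ` Z)) \<Longrightarrow> \<exists>f. inj_on f B \<and> (\<forall>b\<in>B. f b \<in> H b)"
    and fin: "finite A" "\<forall>a\<in>A. finite (G a)" and hall: "\<forall>Z\<subseteq>A. card Z \<le> card (\<Union>(G ` Z))"
    and X: "X \<subseteq> A" "X \<noteq> {}" "X \<noteq> A" "card (\<Union>(G ` X)) = card X"
  shows "\<exists>f. inj_on f A \<and> (\<forall>a\<in>A. f a \<in> G a)"
proof -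
  have "X \<subset> A" "A - X \<subset> A"
    using X(1-3) by blast+
  have "\<exists>f. inj_on f X \<and> (\<forall>a\<in>X. f a \<in> G a)"
    using X(1) fin(2) hall by (intro IH[OF \<open>X \<subset> A\<close>]) auto
  then obtain f1 where f1: "inj_on f1 X" "\<forall>a\<in>X. f1 a \<in> G a"
    by blast
  have "\<exists>f. inj_on f (A - X) \<and> (\<forall>a\<in>A - X. f a \<in> G a - \<Union>(G ` X))"
    using fin hall_condition_outside_tight_set[OF hall fin X(1,4)]
    by (intro IH[OF \<open>A - X \<subset> A\<close>]) auto
  then obtain f2 where f2: "inj_on f2 (A - X)" "\<forall>a\<in>A - X. f2 a \<in> G a - \<Union>(G ` X)"
    by blast
  have "inj_on (\<lambda>a. if a \<in> X then f1 a else f2 a) (X \<union> (A - X))"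
    using f1 f2 by (intro inj_on_if_disjoint_images) auto
  then show ?thesis
    using X(1) f1(2) f2(2) by (intro exI[of _ "\<lambda>a. if a \<in> X then f1 a else f2 a"])
      (auto simp: Un_absorb1)
qed

lemma hall_marriage_surplus:
  fixes A :: "'a set" and G :: "'a \<Rightarrow> 'b set"
  assumes IH: "\<And>B (H :: 'a \<Rightarrow> 'b set). B \<subset> A \<Longrightarrow> \<forall>b\<in>B. finite (H b)
                 \<Longrightarrow> \<forall>Z\<subseteq>B. card Z \<le> card (\<Union>(H ` Z)) \<Longrightarrow> \<exists>f. inj_on f B \<and> (\<forall>b\<in>B. f b \<in> H b)"
    and fin: "finite A" "\<forall>a\<in>A. finite (G a)" and hall: "\<forall>Z\<subseteq>A. card Z \<le> card (\<Union>(G ` Z))"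
    and surplus: "\<forall>Z\<subseteq>A. Z \<noteq> {} \<longrightarrow> Z \<noteq> A \<longrightarrow> card Z < card (\<Union>(G ` Z))"
    and "A \<noteq> {}"
  shows "\<exists>f. inj_on f A \<and> (\<forall>a\<in>A. f a \<in> G a)"
proof -
  obtain a where a: "a \<in> A"
    using \<open>A \<noteq> {}\<close> by blast
  then have "G a \<noteq> {}"
    using hall[rule_format, of "{a}"] by auto
  then obtain b where b: "b \<in> G a"
    by blast
  have "\<exists>f. inj_on f (A - {a}) \<and> (\<forall>x\<in>A - {a}. f x \<in> G x - {b})"
    using a fin hall_condition_remove_element[OF surplus fin a] by (intro IH) auto
  then obtain f where f: "inj_on f (A - {a})" "\<forall>x\<in>A - {a}. f x \<in> G x - {b}"
    by blast
  have "inj_on (f(a := b)) A"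
    using f unfolding inj_on_def by auto
  then show ?thesis
    using f(2) b by (intro exI[of _ "f(a := b)"]) auto
qed

theorem hall_marriage:
  assumes "finite A" "\<forall>a\<in>A. finite (G a)" "\<forall>X\<subseteq>A. card X \<le> card (\<Union>(G ` X))"
  shows "\<exists>f. inj_on f A \<and> (\<forall>a\<in>A. f a \<in> G a)"
  using assms
proof (induction A arbitrary: G rule: finite_psubset_induct)
  case (psubset A)
  show ?case
  proof (cases "\<exists>X. X \<subseteq> A \<and> X \<noteq> {} \<and> X \<noteq> A \<and> card (\<Union>(G ` X)) \<le> card X")
    case True
    then obtain X where X: "X \<subseteq> A" "X \<noteq> {}" "X \<noteq> A" "card (\<Union>(G ` X)) \<le> card X"
      by blast
    then have "card (\<Union>(G ` X)) = card X"
      using psubset.prems(2) by (simp add: le_antisym)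
    then show ?thesis
      using hall_marriage_tight_set[OF _ psubset.hyps psubset.prems X(1-3)] psubset.IH by blast
  next
    case False
    then have "\<forall>Z\<subseteq>A. Z \<noteq> {} \<longrightarrow> Z \<noteq> A \<longrightarrow> card Z < card (\<Union>(G ` Z))"
      by (auto simp: not_le)
    then show ?thesis
      using hall_marriage_surplus[OF _ psubset.hyps psubset.prems] psubset.IH
      by (cases "A = {}") blast+
  qed
qed

lemma hall_condition_add_dummies:
  assumes "finite A" "\<forall>a\<in>A. finite (G a)" "\<forall>X\<subseteq>A. card X \<le> card (\<Union>(G ` X)) + d"
  shows "\<forall>X\<subseteq>A. card X \<le> card (\<Union>((\<lambda>a. G a <+> {..<d}) ` X))"
proof (intro allI impI)
  fix X assume X: "X \<subseteq> A"
  show "card X \<le> card (\<Union>((\<lambda>a. G a <+> {..<d}) ` X))"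
  proof (cases "X = {}")
    case False
    then have "\<Union>((\<lambda>a. G a <+> {..<d}) ` X) = \<Union>(G ` X) <+> {..<d}"
      by auto
    moreover have "finite (\<Union>(G ` X))"
      using X assms(1,2) by (auto intro: finite_subset)
    ultimately have "card (\<Union>((\<lambda>a. G a <+> {..<d}) ` X)) = card (\<Union>(G ` X)) + d"
      by (simp add: card_Plus)
    then show ?thesis
      using assms(3)[rule_format, OF X] by linarith
  qed simp
qed

corollary hall_marriage_defect:
  assumes "finite A" "\<forall>a\<in>A. finite (G a)" "\<forall>X\<subseteq>A. card X \<le> card (\<Union>(G ` X)) + d"
  shows "\<exists>A'\<subseteq>A. card A' = card A - d \<and> (\<exists>f. inj_on f A' \<and> (\<forall>a\<in>A'. f a \<in> G a))"
proof -
  \<comment> \<open>Give every vertex d common dummy neighbours, then drop the vertices matched to them.\<close>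
  obtain f where f: "inj_on f A" "\<forall>a\<in>A. f a \<in> G a <+> {..<d}"
    using hall_marriage[OF assms(1) _ hall_condition_add_dummies[OF assms]] assms(2) by auto
  define A' where "A' = {a\<in>A. f a \<notin> Inr ` {..<d}}"
  have "card (A - A') = card (f ` (A - A'))"
    using f(1) by (simp add: card_image inj_on_diff)
  also have "\<dots> \<le> card (Inr ` {..<d} :: ('b + nat) set)"
    by (rule card_mono) (auto simp: A'_def)
  finally have "card (A - A') \<le> d"
    by (simp add: card_image)
  moreover have "card A \<le> card A' + card (A - A')"
    using card_Un_le[of A' "A - A'"] by (simp add: A'_def Un_absorb1)
  ultimately have "card A - d \<le> card A'"
    by linarith
  then obtain A'' where A'': "A'' \<subseteq> A'" "card A'' = card A - d"
    by (rule obtain_subset_with_card_n)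
  have Inl: "f a = Inl (projl (f a)) \<and> projl (f a) \<in> G a" if "a \<in> A'" for a
    using f(2) that by (auto simp: A'_def)
  have "inj_on (projl \<circ> f) A'"
  proof (rule inj_onI)
    fix a b assume "a \<in> A'" "b \<in> A'" "(projl \<circ> f) a = (projl \<circ> f) b"
    then have "f a = f b"
      using Inl by (metis comp_apply)
    then show "a = b"
      using inj_onD[OF f(1)] \<open>a \<in> A'\<close> \<open>b \<in> A'\<close> by (simp add: A'_def)
  qed
  then have "inj_on (projl \<circ> f) A''"
    using A''(1) by (rule inj_on_subset)
  moreover have "A'' \<subseteq> A"
    using A''(1) by (auto simp: A'_def)
  moreover have "\<forall>a\<in>A''. (projl \<circ> f) a \<in> G a"
    using A''(1) Inl by auto
  ultimately show ?thesis
    using A''(2) by (intro exI[of _ A''] conjI exI[of _ "projl \<circ> f"])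
qed

section \<open>Counting subsets\<close>

lemma bij_betw_subsets_traces:
  fixes U :: "'a set" and D :: "'j \<Rightarrow> 'a set"
  assumes D: "\<forall>j\<in>J. D j \<subseteq> U" and G: "\<forall>j\<in>J. G j \<subseteq> Pow (D j)"
    and disj: "disjoint_family_on D J"
  shows "bij_betw (\<lambda>S. (restrict (\<lambda>j. S \<inter> D j) J, S - \<Union>(D ` J)))
           {S\<in>Pow U. \<forall>j\<in>J. S \<inter> D j \<in> G j} (PiE J G \<times> Pow (U - \<Union>(D ` J)))"
    (is "bij_betw ?split ?A ?B")
proof -
  define glue :: "('j \<Rightarrow> 'a set) \<times> 'a set \<Rightarrow> 'a set" where "glue = (\<lambda>(g, T). \<Union>(g ` J) \<union> T)"
  have inside: "\<forall>i\<in>J. g i \<subseteq> D i" if "g \<in> PiE J G" for g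
    using that G by (auto dest: PiE_mem)
  have trace: "(\<Union>(g ` J) \<union> T) \<inter> D j = g j"
    if "g \<in> PiE J G" "T \<subseteq> U - \<Union>(D ` J)" "j \<in> J" for g T j
    using inside[OF that(1)] that(2,3) disj unfolding disjoint_family_on_def by fastforce
  show ?thesis
  proof (rule bij_betw_byWitness[where f' = glue])
    show "\<forall>S\<in>?A. glue (?split S) = S"
      by (auto simp: glue_def)
    show "?split ` ?A \<subseteq> ?B"
      by auto
    show "\<forall>gT\<in>?B. ?split (glue gT) = gT"
    proof
      fix gT assume "gT \<in> ?B"
      then obtain g T where gT: "gT = (g, T)" "g \<in> PiE J G" "T \<subseteq> U - \<Union>(D ` J)"
        by auto
      have "restrict (\<lambda>j. (\<Union>(g ` J) \<union> T) \<inter> D j) J = restrict g J"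
        using trace[OF gT(2,3)] by (rule restrict_ext)
      moreover have "\<Union>(g ` J) \<union> T - \<Union>(D ` J) = T"
        using inside[OF gT(2)] gT(3) by auto
      ultimately show "?split (glue gT) = gT"
        using gT by (simp add: glue_def)
    qed
    show "glue ` ?B \<subseteq> ?A"
    proof
      fix S assume "S \<in> glue ` ?B"
      then obtain g T where g: "g \<in> PiE J G" and T: "T \<subseteq> U - \<Union>(D ` J)" and S: "S = \<Union>(g ` J) \<union> T"
        by (auto simp: glue_def)
      have "S \<subseteq> U"
        using inside[OF g] T D S by blast
      moreover have "\<forall>j\<in>J. S \<inter> D j \<in> G j"
        using trace[OF g T] g S by auto
      ultimately show "S \<in> ?A"
        by simp
    qed
  qed
qed

lemma card_subsets_with_traces:
  assumes U: "finite U" and J: "finite J" and D: "\<forall>j\<in>J. D j \<subseteq> U"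
    and G: "\<forall>j\<in>J. G j \<subseteq> Pow (D j)" and disj: "disjoint_family_on D J"
  shows "card {S\<in>Pow U. \<forall>j\<in>J. S \<inter> D j \<in> G j}
           = (\<Prod>j\<in>J. card (G j)) * 2 ^ (card U - (\<Sum>j\<in>J. card (D j)))"
proof -
  have "card {S\<in>Pow U. \<forall>j\<in>J. S \<inter> D j \<in> G j} = card (PiE J G) * card (Pow (U - \<Union>(D ` J)))"
    using bij_betw_same_card[OF bij_betw_subsets_traces[OF D G disj]]
    by (simp add: card_cartesian_product)
  moreover have "card (\<Union>(D ` J)) = (\<Sum>j\<in>J. card (D j))"
    using disj J D U by (intro card_UN_disjoint') (auto intro: finite_subset)
  then have "card (U - \<Union>(D ` J)) = card U - (\<Sum>j\<in>J. card (D j))"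
    using D U by (simp add: card_Diff_subset finite_subset UN_subset_iff)
  ultimately show ?thesis
    using U J by (simp add: card_PiE card_Pow)
qed

lemma card_subsets_respecting_implications:
  assumes U: "finite U" and p: "inj_on p J" "p ` J \<subseteq> U" and q: "inj_on q J" "q ` J \<subseteq> U"
    and disj: "p ` J \<inter> q ` J = {}"
  shows "real (card {S\<in>Pow U. \<forall>j\<in>J. p j \<in> S \<longrightarrow> q j \<in> S}) = 2 ^ card U * (3/4) ^ card J"
proof -
  define D where "D j = {p j, q j}" for j
  define G where "G j = {T\<in>Pow (D j). p j \<in> T \<longrightarrow> q j \<in> T}" for j
  have J: "finite J"
    using p U by (meson finite_imageD finite_subset)
  have pq: "p j \<noteq> q j" if "j \<in> J" for j
    using disj that by blast
  have "disjoint_family_on D J"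
    using inj_onD[OF p(1)] inj_onD[OF q(1)] disj
    unfolding disjoint_family_on_def D_def by blast
  moreover have "\<forall>j\<in>J. card (D j) = 2" "\<forall>j\<in>J. D j \<subseteq> U" "\<forall>j\<in>J. G j \<subseteq> Pow (D j)"
    using pq p(2) q(2) by (auto simp: D_def G_def)
  moreover have "G j = {{}, {q j}, {p j, q j}}" for j
    by (auto simp: G_def D_def)
  then have "\<forall>j\<in>J. card (G j) = 3"
    using pq by simp
  moreover have "{S\<in>Pow U. \<forall>j\<in>J. p j \<in> S \<longrightarrow> q j \<in> S} = {S\<in>Pow U. \<forall>j\<in>J. S \<inter> D j \<in> G j}"
    by (auto simp: D_def G_def)
  ultimately have card: "card {S\<in>Pow U. \<forall>j\<in>J. p j \<in> S \<longrightarrow> q j \<in> S}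
      = 3 ^ card J * 2 ^ (card U - 2 * card J)"
    using card_subsets_with_traces[OF U J] by simp
  have "card J + card J = card (p ` J \<union> q ` J)"
    using J disj p(1) q(1) by (simp add: card_Un_disjoint card_image)
  also have "\<dots> \<le> card U"
    using p(2) q(2) U by (intro card_mono) auto
  finally have "card U = (card U - 2 * card J) + 2 * card J"
    by simp
  then have "(2::real) ^ card U = 2 ^ (card U - 2 * card J) * 2 ^ (2 * card J)"
    by (metis power_add)
  also have "(2::real) ^ (2 * card J) = 4 ^ card J"
    by (simp add: power_mult)
  finally have "(2::real) ^ card U = 2 ^ (card U - 2 * card J) * 4 ^ card J" .
  then show ?thesis
    unfolding card by (simp add: power_divide)
qed

lemma real_card_UN_le:
  assumes "finite I" "\<forall>i\<in>I. real (card (F i)) \<le> B"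
  shows "real (card (\<Union>i\<in>I. F i)) \<le> real (card I) * B"
proof -
  have "real (card (\<Union>i\<in>I. F i)) \<le> (\<Sum>i\<in>I. real (card (F i)))"
    by (metis card_UN_le[OF assms(1)] of_nat_le_iff of_nat_sum)
  also have "\<dots> \<le> real (card I) * B"
    using assms(2) by (intro sum_bounded_above) auto
  finally show ?thesis .
qed

section \<open>Orientations with nested rows\<close>

(* S `` {a} \<inter> C is the out-neighbourhood in {True} \<times> C of the vertex (False, a) of
   bip_tournament n S. *)
definition nested_rows :: "(nat \<times> nat) set \<Rightarrow> nat set \<Rightarrow> nat set \<Rightarrow> bool" where
  "nested_rows S A C \<longleftrightarrow>
     (\<forall>a\<in>A. \<forall>b\<in>A. S `` {a} \<inter> C \<subseteq> S `` {b} \<inter> C \<or> S `` {b} \<inter> C \<subseteq> S `` {a} \<inter> C)"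

lemma nested_rows_iff_no_alternating_square:
  "nested_rows S A C \<longleftrightarrow>
     \<not> (\<exists>a\<in>A. \<exists>b\<in>A. \<exists>c\<in>C. \<exists>d\<in>C. (a, c) \<in> S \<and> (b, c) \<notin> S \<and> (b, d) \<in> S \<and> (a, d) \<notin> S)"
  unfolding nested_rows_def by blast

lemma nested_rows_converse: "nested_rows (S\<inverse>) C A \<longleftrightarrow> nested_rows S A C"
  unfolding nested_rows_iff_no_alternating_square by blast

definition row_inclusions :: "nat \<Rightarrow> nat list \<Rightarrow> nat set \<Rightarrow> (nat \<times> nat) set set" where
  "row_inclusions k xs Y = {S. \<forall>i<k. \<forall>y\<in>Y. (xs ! i, y) \<in> S \<longrightarrow> (xs ! (k + i), y) \<in> S}"

(* Listing the excluded columns, with repetitions, makes them easy to count; 4k \<le> n + 2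
   leaves at least n/2 columns. *)
definition bad_orientations_level :: "nat \<Rightarrow> nat \<Rightarrow> (nat \<times> nat) set set" where
  "bad_orientations_level n k =
     (\<Union>xs\<in>{xs. set xs \<subseteq> {..<n} \<and> length xs = 2 * k \<and> distinct xs}.
      \<Union>zs\<in>{zs. set zs \<subseteq> {..<n} \<and> length zs = 2 * k - 1}.
        row_inclusions k xs ({..<n} - set zs))"

definition bad_orientations :: "nat \<Rightarrow> (nat \<times> nat) set set" where
  "bad_orientations n = (\<Union>k\<in>{k. 1 \<le> k \<and> 4 * k \<le> n + 2}. bad_orientations_level n k)"

lemma exists_list_sorted_by_inclusion:
  assumes "finite A" "\<forall>a\<in>A. finite (R a)" "\<forall>a\<in>A. \<forall>b\<in>A. R a \<subseteq> R b \<or> R b \<subseteq> R a"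
  shows "\<exists>xs. distinct xs \<and> set xs = A \<and> (\<forall>i j. i \<le> j \<longrightarrow> j < length xs \<longrightarrow> R (xs ! i) \<subseteq> R (xs ! j))"
proof -
  obtain ys where ys: "distinct ys" "set ys = A"
    using assms(1) finite_distinct_list by blast
  define xs where "xs = sort_key (\<lambda>a. card (R a)) ys"
  have xs: "distinct xs" "set xs = A"
    using ys by (simp_all add: xs_def)
  have "R (xs ! i) \<subseteq> R (xs ! j)" if "i \<le> j" "j < length xs" for i j
  proof -
    have "card (R (xs ! i)) \<le> card (R (xs ! j))"
      using sorted_nth_mono[OF sorted_sort_key[of "\<lambda>a. card (R a)" ys], of i j] that
      by (simp add: xs_def)
    moreover have "xs ! i \<in> A" "xs ! j \<in> A"
      using that xs(2) by auto
    ultimately show ?thesis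
      using assms(2,3) card_seteq by metis
  qed
  then show ?thesis
    using xs by blast
qed

lemma exists_list_covering_set:
  assumes "finite Z" "Z \<subseteq> B" "card Z \<le> m" "b \<in> B"
  shows "\<exists>zs. set zs \<subseteq> B \<and> length zs = m \<and> Z \<subseteq> set zs"
proof -
  obtain ys where ys: "distinct ys" "set ys = Z"
    using assms(1) finite_distinct_list by blast
  then have "length ys = card Z"
    using distinct_card by metis
  then show ?thesis
    using assms ys by (intro exI[of _ "ys @ replicate (m - card Z) b"]) auto
qed

lemma nested_rows_mono:
  assumes "nested_rows S A C" "A' \<subseteq> A" "Y \<subseteq> C"
  shows "nested_rows S A' Y"
  unfolding nested_rows_def
proof (intro ballI)
  fix a b assume "a \<in> A'" "b \<in> A'"
  then have "S `` {a} \<inter> C \<subseteq> S `` {b} \<inter> C \<or> S `` {b} \<inter> C \<subseteq> S `` {a} \<inter> C"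
    using assms(1,2) unfolding nested_rows_def by blast
  then show "S `` {a} \<inter> Y \<subseteq> S `` {b} \<inter> Y \<or> S `` {b} \<inter> Y \<subseteq> S `` {a} \<inter> Y"
    using assms(3) by blast
qed

lemma nested_rows_row_inclusions:
  assumes "finite A" "card A = 2 * k" "finite Y" "nested_rows S A Y"
  shows "\<exists>xs. distinct xs \<and> set xs = A \<and> length xs = 2 * k \<and> S \<in> row_inclusions k xs Y"
proof -
  have "\<forall>a\<in>A. finite (S `` {a} \<inter> Y)"
    using assms(3) by simp
  moreover have "\<forall>a\<in>A. \<forall>b\<in>A. S `` {a} \<inter> Y \<subseteq> S `` {b} \<inter> Y \<or> S `` {b} \<inter> Y \<subseteq> S `` {a} \<inter> Y"
    using assms(4) unfolding nested_rows_def .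
  ultimately obtain xs where xs: "distinct xs" "set xs = A"
    "\<forall>i j. i \<le> j \<longrightarrow> j < length xs \<longrightarrow> S `` {xs ! i} \<inter> Y \<subseteq> S `` {xs ! j} \<inter> Y"
    using exists_list_sorted_by_inclusion[OF assms(1), of "\<lambda>a. S `` {a} \<inter> Y"] by blast
  have length: "length xs = 2 * k"
    using xs(1,2) assms(2) distinct_card by fastforce
  have "S \<in> row_inclusions k xs Y"
    unfolding row_inclusions_def
  proof (intro CollectI allI impI ballI)
    fix i y assume "i < k" "y \<in> Y" "(xs ! i, y) \<in> S"
    then have "y \<in> S `` {xs ! i} \<inter> Y"
      by simp
    moreover have "S `` {xs ! i} \<inter> Y \<subseteq> S `` {xs ! (k + i)} \<inter> Y"
      using xs(3)[rule_format, of i "k + i"] \<open>i < k\<close> length by simp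
    ultimately show "(xs ! (k + i), y) \<in> S"
      by blast
  qed
  then show ?thesis
    using xs(1,2) length by blast
qed

lemma nested_rows_in_bad_orientations:
  assumes A: "A \<subseteq> {..<n}" and C: "C \<subseteq> {..<n}" and le: "card A \<le> card C"
    and size: "n + 2 \<le> card A + card C" and nested: "nested_rows S A C"
  shows "S \<in> bad_orientations n"
proof -
  have "card A \<le> n" "card C \<le> n"
    using card_mono[OF finite_lessThan A] card_mono[OF finite_lessThan C] by simp_all
  \<comment> \<open>2k vertices of A fit, the columns outside C fit into 2k - 1 entries,
    and |A| \<le> |C| gives 4k \<le> n + 2.\<close>
  define k where "k = (n + 2 - card C) div 2"
  have "2 * k \<le> n + 2 - card C" "n + 2 - card C \<le> 2 * k + 1"
    unfolding k_def by linarith+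
  then have k: "1 \<le> k" "4 * k \<le> n + 2" "2 * k \<le> card A" "n - card C \<le> 2 * k - 1" "0 < n"
    using le size \<open>card A \<le> n\<close> \<open>card C \<le> n\<close> by linarith+
  have "card ({..<n} - C) \<le> 2 * k - 1"
    using C k(4) by (simp add: card_Diff_subset finite_subset)
  then obtain zs where zs: "set zs \<subseteq> {..<n}" "length zs = 2 * k - 1" "{..<n} - C \<subseteq> set zs"
    using exists_list_covering_set[of "{..<n} - C" "{..<n}" "2 * k - 1" 0] k(5) by auto
  obtain A' where A': "A' \<subseteq> A" "card A' = 2 * k" "finite A'"
    by (rule obtain_subset_with_card_n[OF k(3)])
  have "nested_rows S A' ({..<n} - set zs)"
    using zs(3) by (intro nested_rows_mono[OF nested A'(1)]) blast
  then obtain xs where xs: "distinct xs" "set xs = A'" "length xs = 2 * k"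
    and S: "S \<in> row_inclusions k xs ({..<n} - set zs)"
    using nested_rows_row_inclusions[OF A'(3,2)] by blast
  show ?thesis
    unfolding bad_orientations_def bad_orientations_level_def
  proof (intro UN_I)
    show "k \<in> {k. 1 \<le> k \<and> 4 * k \<le> n + 2}"
      using k(1,2) by simp
    show "xs \<in> {xs. set xs \<subseteq> {..<n} \<and> length xs = 2 * k \<and> distinct xs}"
      using xs A'(1) A by auto
    show "zs \<in> {zs. set zs \<subseteq> {..<n} \<and> length zs = 2 * k - 1}"
      using zs(1,2) by simp
  qed (fact S)
qed

lemma card_row_inclusions:
  assumes xs: "distinct xs" "length xs = 2 * k" "set xs \<subseteq> {..<n}" and Y: "Y \<subseteq> {..<n}"
  shows "real (card (Pow ({..<n} \<times> {..<n}) \<inter> row_inclusions k xs Y))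
           = 2 ^ (n * n) * (3/4) ^ (k * card Y)"
proof -
  define J where "J = {..<k} \<times> Y"
  define p where "p = (\<lambda>(i, y::nat). (xs ! i, y))"
  define q where "q = (\<lambda>(i, y::nat). (xs ! (k + i), y))"
  have nth_eq: "xs ! i = xs ! j \<Longrightarrow> i < 2 * k \<Longrightarrow> j < 2 * k \<Longrightarrow> i = j" for i j
    using nth_eq_iff_index_eq[OF xs(1)] xs(2) by simp
  have nth_less: "xs ! i < n" if "i < 2 * k" for i
  proof -
    have "xs ! i \<in> set xs"
      using that xs(2) by (intro nth_mem) simp
    then show ?thesis
      using xs(3) by blast
  qed
  have "inj_on p J" "inj_on q J"
    by (auto simp: inj_on_def p_def q_def J_def dest: nth_eq)
  moreover have "p ` J \<inter> q ` J = {}"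
    by (force simp: p_def q_def J_def dest: nth_eq)
  moreover have "p ` J \<subseteq> {..<n} \<times> {..<n}" "q ` J \<subseteq> {..<n} \<times> {..<n}"
    using nth_less Y by (auto simp: p_def q_def J_def)
  ultimately have "real (card {S\<in>Pow ({..<n} \<times> {..<n}). \<forall>j\<in>J. p j \<in> S \<longrightarrow> q j \<in> S})
      = 2 ^ card ({..<n} \<times> {..<n}) * (3/4) ^ card J"
    by (intro card_subsets_respecting_implications) auto
  moreover have "Pow ({..<n} \<times> {..<n}) \<inter> row_inclusions k xs Y
      = {S\<in>Pow ({..<n} \<times> {..<n}). \<forall>j\<in>J. p j \<in> S \<longrightarrow> q j \<in> S}"
    by (auto simp: row_inclusions_def J_def p_def q_def)
  ultimately show ?thesis
    by (simp add: J_def card_cartesian_product)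
qed

lemma three_quarters_power_le:
  assumes "n \<le> 2 * m"
  shows "(3/4::real) ^ (k * m) \<le> ((9/10) ^ n) ^ k"
proof -
  have "(3/4::real) ^ m \<le> (81/100) ^ m"
    by (rule power_mono) auto
  also have "(81/100::real) ^ m = (9/10) ^ (2 * m)"
    by (simp add: power_mult power2_eq_square)
  also have "\<dots> \<le> (9/10) ^ n"
    using assms by (intro power_decreasing) auto
  finally have "(3/4::real) ^ m \<le> (9/10) ^ n" .
  then have "((3/4::real) ^ m) ^ k \<le> ((9/10) ^ n) ^ k"
    by (intro power_mono) auto
  then show ?thesis
    by (simp only: mult.commute[of k m] power_mult)
qed

lemma card_row_inclusions_le:
  assumes xs: "distinct xs" "length xs = 2 * k" "set xs \<subseteq> {..<n}"
    and zs: "length zs = 2 * k - 1" and k: "4 * k \<le> n + 2"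
  shows "real (card (Pow ({..<n} \<times> {..<n}) \<inter> row_inclusions k xs ({..<n} - set zs)))
           \<le> 2 ^ (n * n) * ((9/10) ^ n) ^ k"
proof -
  have "n - card (set zs) \<le> card ({..<n} - set zs)"
    using diff_card_le_card_Diff[of "set zs" "{..<n}"] by simp
  then have "n \<le> 2 * card ({..<n} - set zs)"
    using card_length[of zs] zs k by linarith
  then show ?thesis
    using three_quarters_power_le[of n _ k] by (subst card_row_inclusions[OF xs]) auto
qed

lemma card_bad_orientations_level_le:
  assumes k: "1 \<le> k" "4 * k \<le> n + 2"
  shows "real (card (Pow ({..<n} \<times> {..<n}) \<inter> bad_orientations_level n k))
           \<le> 2 ^ (n * n) * (real n ^ 4 * (9/10) ^ n) ^ k"
proof -
  define Xs where "Xs = {xs. set xs \<subseteq> {..<n} \<and> length xs = 2 * k \<and> distinct xs}"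
  define Zs where "Zs = {zs. set zs \<subseteq> {..<n} \<and> length zs = 2 * k - 1}"
  define B where "B = (2::real) ^ (n * n) * ((9/10) ^ n) ^ k"
  have "finite Xs" "finite Zs"
    unfolding Xs_def Zs_def by (auto intro: finite_subset[OF _ finite_lists_length_eq])
  have "card Xs \<le> n ^ (2 * k)"
    using card_mono[OF finite_lists_length_eq, of "{..<n}" Xs] card_lists_length_eq[of "{..<n}"]
    unfolding Xs_def by fastforce
  have "card Zs \<le> n ^ (2 * k)"
    using card_lists_length_eq[of "{..<n}" "2 * k - 1"] k unfolding Zs_def
    by (simp add: power_increasing)
  have "B \<ge> 0"
    by (simp add: B_def)
  have "real (card (\<Union>zs\<in>Zs. Pow ({..<n} \<times> {..<n}) \<inter> row_inclusions k xs ({..<n} - set zs)))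
      \<le> real n ^ (2 * k) * B" if "xs \<in> Xs" for xs
  proof -
    have "real (card (\<Union>zs\<in>Zs. Pow ({..<n} \<times> {..<n}) \<inter> row_inclusions k xs ({..<n} - set zs)))
        \<le> real (card Zs) * B"
      using card_row_inclusions_le that k(2) unfolding Xs_def Zs_def B_def
      by (intro real_card_UN_le \<open>finite Zs\<close>[unfolded Zs_def]) auto
    also have "\<dots> \<le> real n ^ (2 * k) * B"
      using \<open>card Zs \<le> n ^ (2 * k)\<close> \<open>B \<ge> 0\<close> by (intro mult_right_mono) (simp_all flip: of_nat_power)
    finally show ?thesis .
  qed
  then have "real (card (\<Union>xs\<in>Xs. \<Union>zs\<in>Zs.
                            Pow ({..<n} \<times> {..<n}) \<inter> row_inclusions k xs ({..<n} - set zs)))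
      \<le> real (card Xs) * (real n ^ (2 * k) * B)"
    by (intro real_card_UN_le \<open>finite Xs\<close>) auto
  also have "\<dots> \<le> real n ^ (2 * k) * (real n ^ (2 * k) * B)"
    using \<open>card Xs \<le> n ^ (2 * k)\<close> \<open>B \<ge> 0\<close> by (intro mult_right_mono) (simp_all flip: of_nat_power)
  also have "real n ^ (2 * k) * (real n ^ (2 * k) * B) = (real n ^ 4) ^ k * B"
    by (simp add: power_mult[symmetric] power_add[symmetric])
  also have "\<dots> = 2 ^ (n * n) * (real n ^ 4 * (9/10) ^ n) ^ k"
    unfolding B_def by (simp add: power_mult_distrib)
  also have "(\<Union>xs\<in>Xs. \<Union>zs\<in>Zs. Pow ({..<n} \<times> {..<n}) \<inter> row_inclusions k xs ({..<n} - set zs))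
      = Pow ({..<n} \<times> {..<n}) \<inter> bad_orientations_level n k"
    unfolding Xs_def Zs_def bad_orientations_level_def by blast
  finally show ?thesis .
qed

lemma card_bad_orientations_le:
  assumes "real n ^ 4 * (9/10) ^ n \<le> 1"
  shows "real (card (Pow ({..<n} \<times> {..<n}) \<inter> bad_orientations n))
           \<le> 2 ^ (n * n) * (real n ^ 5 * (9/10) ^ n)"
proof -
  define q where "q = real n ^ 4 * (9/10) ^ n"
  define Ks where "Ks = {k. 1 \<le> k \<and> 4 * k \<le> n + 2}"
  define level where "level k = Pow ({..<n} \<times> {..<n}) \<inter> bad_orientations_level n k" for k
  have "Ks \<subseteq> {1..n}"
    by (auto simp: Ks_def)
  then have "finite Ks" "card Ks \<le> n"
    using finite_subset card_mono[of "{1..n}" Ks] by auto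
  have "real (card (level k)) \<le> 2 ^ (n * n) * q" if "k \<in> Ks" for k
  proof -
    have "real (card (level k)) \<le> 2 ^ (n * n) * q ^ k"
      using card_bad_orientations_level_le[of k n] that unfolding Ks_def q_def level_def by simp
    also have "q ^ k \<le> q ^ 1"
      using that assms by (intro power_decreasing) (auto simp: Ks_def q_def)
    finally show ?thesis
      by (simp add: mult_left_mono)
  qed
  moreover have "Pow ({..<n} \<times> {..<n}) \<inter> bad_orientations n = (\<Union>k\<in>Ks. level k)"
    unfolding bad_orientations_def Ks_def level_def by blast
  ultimately have "real (card (Pow ({..<n} \<times> {..<n}) \<inter> bad_orientations n))
      \<le> real (card Ks) * (2 ^ (n * n) * q)"
    using real_card_UN_le[OF \<open>finite Ks\<close>, of level] by simp
  also have "\<dots> \<le> real n * (2 ^ (n * n) * q)"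
    using \<open>card Ks \<le> n\<close> by (intro mult_right_mono) (auto simp: q_def)
  also have "\<dots> = 2 ^ (n * n) * (real n ^ 5 * (9/10) ^ n)"
    unfolding q_def by (simp add: power_Suc[of "real n" 4, symmetric] del: power_Suc)
  finally show ?thesis .
qed

section \<open>Feedback arc sets of bipartite tournaments\<close>

lemma directed_cycle_iff_cycle_edges:
  "directed_cycle E vs \<longleftrightarrow> vs \<noteq> [] \<and> distinct vs \<and> cycle_edges vs \<subseteq> E"
  by (auto simp: directed_cycle_def cycle_edges_def)

lemma cycle_edges_four: "cycle_edges [u, v, w, x] = {(u, v), (v, w), (w, x), (x, u)}"
proof -
  have "cycle_edges vs = (\<lambda>i. (vs ! i, vs ! ((i + 1) mod length vs))) ` {..<length vs}"
    for vs :: "'a list"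
    by (auto simp: cycle_edges_def)
  moreover have "{..<length [u, v, w, x]} = {0, 1, 2, 3}"
    by auto
  ultimately show ?thesis
    by simp
qed

definition oriented_edge :: "(nat \<times> nat) set \<Rightarrow> nat \<Rightarrow> nat \<Rightarrow> vert \<times> vert" where
  "oriented_edge S a b = (if (a, b) \<in> S then ((False, a), (True, b)) else ((True, b), (False, a)))"

lemma oriented_edge_ends:
  "{fst (oriented_edge S a b), snd (oriented_edge S a b)} = {(False, a), (True, b)}"
  by (auto simp: oriented_edge_def)

lemma feedback_arc_set_meets_square:
  assumes fas: "feedback_arc_set (bip_tournament n S) F"
    and "a < n" "b < n" "c < n" "d < n"
    and S: "(a, c) \<in> S" "(b, c) \<notin> S" "(b, d) \<in> S" "(a, d) \<notin> S"
  shows "oriented_edge S a c \<in> F \<or> oriented_edge S b c \<in> F \<or>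
         oriented_edge S b d \<in> F \<or> oriented_edge S a d \<in> F"
proof -
  define vs where "vs = [(False, a), (True, c), (False, b), (True, d)]"
  have edges: "cycle_edges vs =
      {oriented_edge S a c, oriented_edge S b c, oriented_edge S b d, oriented_edge S a d}"
    using S by (simp add: vs_def cycle_edges_four oriented_edge_def insert_commute)
  have "directed_cycle (bip_tournament n S) vs"
    unfolding directed_cycle_iff_cycle_edges edges
    using assms by (auto simp: vs_def oriented_edge_def bip_tournament_def)
  then have "cycle_edges vs \<inter> F \<noteq> {}"
    using fas unfolding feedback_arc_set_def by blast
  then show ?thesis
    unfolding edges by blast
qed

lemma nested_rows_if_no_feedback_edges:
  assumes fas: "feedback_arc_set (bip_tournament n S) F"
    and X: "X \<subseteq> {..<n}" and Y: "Y \<subseteq> {..<n}" and none: "\<forall>a\<in>X. \<forall>b\<in>Y. oriented_edge S a b \<notin> F"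
  shows "nested_rows S X Y"
  unfolding nested_rows_iff_no_alternating_square
proof clarify
  fix a b c d assume "a \<in> X" "b \<in> X" "c \<in> Y" "d \<in> Y"
    and "(a, c) \<in> S" "(b, c) \<notin> S" "(b, d) \<in> S" "(a, d) \<notin> S"
  then show False
    using feedback_arc_set_meets_square[OF fas, of a b c d] X Y none by blast
qed

lemma matching_of_injection:
  assumes "inj_on f A"
  shows "is_matching ((\<lambda>a. oriented_edge S a (f a)) ` A)"
    and "card ((\<lambda>a. oriented_edge S a (f a)) ` A) = card A"
proof -
  have "inj_on (\<lambda>a. oriented_edge S a (f a)) A"
    by (rule inj_onI) (auto simp: oriented_edge_def split: if_splits)
  then show "card ((\<lambda>a. oriented_edge S a (f a)) ` A) = card A"
    by (rule card_image)
  show "is_matching ((\<lambda>a. oriented_edge S a (f a)) ` A)"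
    unfolding is_matching_def
  proof (intro ballI impI)
    fix e e' assume "e \<in> (\<lambda>a. oriented_edge S a (f a)) ` A" "e' \<in> (\<lambda>a. oriented_edge S a (f a)) ` A"
      and "e \<noteq> e'"
    then obtain a b where "a \<in> A" "b \<in> A" "a \<noteq> b"
      and "e = oriented_edge S a (f a)" "e' = oriented_edge S b (f b)"
      by blast
    then have "f a \<noteq> f b"
      using inj_onD[OF assms] by blast
    then show "{fst e, snd e} \<inter> {fst e', snd e'} = {}"
      using \<open>a \<noteq> b\<close> unfolding \<open>e = _\<close> \<open>e' = _\<close> oriented_edge_ends by auto
  qed
qed

lemma feedback_arc_set_matching_or_nested_rows:
  assumes fas: "feedback_arc_set (bip_tournament n S) F"
  shows "(\<exists>M\<subseteq>F. is_matching M \<and> card M = n - 1) \<or>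
         (\<exists>X Y. X \<subseteq> {..<n} \<and> Y \<subseteq> {..<n} \<and> n + 2 \<le> card X + card Y \<and> nested_rows S X Y)"
proof -
  define N where "N a = {b\<in>{..<n}. oriented_edge S a b \<in> F}" for a
  show ?thesis
  proof (cases "\<forall>X\<subseteq>{..<n}. card X \<le> card (\<Union>(N ` X)) + 1")
    case True
    then obtain A f where A: "A \<subseteq> {..<n}" "card A = n - 1" and f: "inj_on f A" "\<forall>a\<in>A. f a \<in> N a"
      using hall_marriage_defect[of "{..<n}" N 1] by (auto simp: N_def)
    have "(\<lambda>a. oriented_edge S a (f a)) ` A \<subseteq> F"
      using f(2) by (auto simp: N_def)
    then show ?thesis
      using matching_of_injection[OF f(1), of S] A(2)
      by (intro disjI1 exI[of _ "(\<lambda>a. oriented_edge S a (f a)) ` A"]) simp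
  next
    case False
    then obtain X where X: "X \<subseteq> {..<n}" "card (\<Union>(N ` X)) + 2 \<le> card X"
      by (auto simp: not_le)
    define Y where "Y = {..<n} - \<Union>(N ` X)"
    have "\<Union>(N ` X) \<subseteq> {..<n}"
      by (auto simp: N_def)
    then have "card Y = n - card (\<Union>(N ` X))"
      unfolding Y_def by (simp add: card_Diff_subset finite_subset)
    moreover have "card X \<le> n"
      using card_mono[OF finite_lessThan X(1)] by simp
    ultimately have "n + 2 \<le> card X + card Y"
      using X(2) by linarith
    moreover have "nested_rows S X Y"
      using X(1) by (intro nested_rows_if_no_feedback_edges[OF fas]) (auto simp: Y_def N_def)
    ultimately show ?thesis
      using X(1) by (auto simp: Y_def)
  qed
qed

lemma good_property_if_not_bad:
  assumes "S \<notin> bad_orientations n" "S\<inverse> \<notin> bad_orientations n"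
  shows "good_property n S"
  unfolding good_property_def
proof (intro allI impI)
  fix F assume "minimal_feedback_arc_set (bip_tournament n S) F"
  then have fas: "feedback_arc_set (bip_tournament n S) F"
    by (simp add: minimal_feedback_arc_set_def)
  have False if X: "X \<subseteq> {..<n}" and Y: "Y \<subseteq> {..<n}" and size: "n + 2 \<le> card X + card Y"
    and nested: "nested_rows S X Y" for X Y
  proof (cases "card X \<le> card Y")
    case True
    then show False
      using nested_rows_in_bad_orientations[OF X Y True size nested] assms(1) by blast
  next
    case False
    \<comment> \<open>Transposing S exchanges the two vertex classes.\<close>
    then show False
      using nested_rows_in_bad_orientations[OF Y X _ _, of "S\<inverse>"] size nested assms(2)
      by (simp add: nested_rows_converse add.commute)
  qed
  then show "\<exists>M\<subseteq>F. is_matching M \<and> card M = n - 1"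
    using feedback_arc_set_matching_or_nested_rows[OF fas] by blast
qed

lemma prob_good_property_ge:
  assumes "real n ^ 4 * (9/10) ^ n \<le> 1"
  shows "1 - 2 * (real n ^ 5 * (9/10) ^ n)
           \<le> measure_pmf.prob (pmf_of_set (orientations n)) {S. good_property n S}"
proof -
  define P where "P = Pow ({..<n} \<times> {..<n})"
  define G where "G = P \<inter> {S. good_property n S}"
  define B where "B = P \<inter> bad_orientations n"
  define B' where "B' = P \<inter> {S. S\<inverse> \<in> bad_orientations n}"
  have "finite P" "P \<noteq> {}" and card_P: "card P = 2 ^ (n * n)"
    by (auto simp: P_def card_Pow card_cartesian_product)
  have "B' = converse ` B"
    by (auto simp: P_def B_def B'_def image_iff)
  then have "card B' = card B"
    by (simp add: card_image inj_on_def)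
  have "P \<subseteq> G \<union> B \<union> B'"
    using good_property_if_not_bad by (auto simp: G_def B_def B'_def)
  then have "card P \<le> card (G \<union> B \<union> B')"
    using \<open>finite P\<close> by (intro card_mono) (auto simp: G_def B_def B'_def)
  also have "\<dots> \<le> card G + card B + card B'"
    by (meson card_Un_le add_right_mono order_trans)
  finally have "real (card P) \<le> real (card G) + 2 * real (card B)"
    using \<open>card B' = card B\<close> by simp
  moreover have "real (card B) \<le> 2 ^ (n * n) * (real n ^ 5 * (9/10) ^ n)"
    unfolding B_def P_def by (rule card_bad_orientations_le[OF assms])
  ultimately have "2 ^ (n * n) * (1 - 2 * (real n ^ 5 * (9/10) ^ n)) \<le> real (card G)"
    unfolding card_P by (simp add: algebra_simps)
  then show ?thesis
    using \<open>finite P\<close> \<open>P \<noteq> {}\<close> card_P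
    by (simp add: orientations_def measure_pmf_of_set G_def P_def pos_le_divide_eq mult.commute)
qed

theorem proposition3p1:
  shows "(\<lambda>n. measure_pmf.prob (pmf_of_set (orientations n)) {S. good_property n S})
           \<longlonglongrightarrow> 1"
proof (rule tendsto_sandwich[OF _ _ _ tendsto_const])
  have "(\<lambda>n. real n ^ 4 * (9/10) ^ n) \<longlonglongrightarrow> 0"
    by real_asymp
  then have "eventually (\<lambda>n. real n ^ 4 * (9/10) ^ n < 1) sequentially"
    by (rule order_tendstoD(2)) simp
  then have "eventually (\<lambda>n. real n ^ 4 * (9/10) ^ n \<le> 1) sequentially"
    by (rule eventually_mono) simp
  then show "eventually (\<lambda>n. 1 - 2 * (real n ^ 5 * (9/10) ^ n)
      \<le> measure_pmf.prob (pmf_of_set (orientations n)) {S. good_property n S}) sequentially"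
    by (rule eventually_mono) (rule prob_good_property_ge)
  show "eventually (\<lambda>n.
      measure_pmf.prob (pmf_of_set (orientations n)) {S. good_property n S} \<le> 1) sequentially"
    by simp
  show "(\<lambda>n. 1 - 2 * (real n ^ 5 * (9/10) ^ n)) \<longlonglongrightarrow> 1"
    by real_asymp
qed

end
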